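(* Let $T$ be an $n\times n$ complex matrix with distinct eigenvalues $\lambda_1,\dots,\lambda_n$. Let $u_1,\dots,u_n$ be unit eigenvectors of $T$ with $Tu_i=\lambda_iu_i$, let $v_1,\dots,v_n$ be unit eigenvectors of $T^*$ with $T^*v_i=\overline{\lambda_i}v_i$, and let $U=(u_1|\cdots|u_n)$ and $V=(v_1|\cdots|v_n)$. If $|\det U|\neq|\det V|$, then $T$ is not unitarily equivalent to a complex symmetric matrix.
   Context: A complex symmetric matrix is a square complex matrix $S$ with $S=S^t$. Two matrices $A,B\in M_n(\mathbb{C})$ are unitarily equivalent if $A=W^*BW$ for some unitary $W$. *)

theory Defs
  imports "HOL-Analysis.Analysis"
begin

definition cadj :: "complex^'n^'n \<Rightarrow> complex^'n^'n" where
  "cadj M = (\<chi> i j. cnj (M $ j $ i))"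

definition unitary_mat :: "complex^'n^'n \<Rightarrow> bool" where
  "unitary_mat W \<longleftrightarrow> cadj W ** W = mat 1"

definition unitarily_equivalent :: "complex^'n^'n \<Rightarrow> complex^'n^'n \<Rightarrow> bool" where
  "unitarily_equivalent A B \<longleftrightarrow> (\<exists>W. unitary_mat W \<and> A = cadj W ** B ** W)"

definition complex_symmetric :: "complex^'n^'n \<Rightarrow> bool" where
  "complex_symmetric S \<longleftrightarrow> transpose S = S"

end

theory Submission imports Defs begin

text \<open>
  Suppose \<open>T = W\<^sup>* S W\<close> with \<open>W\<close> unitary and \<open>S\<close> symmetric. The antiunitary map
  \<open>J x = W\<^sup>* conj (W x)\<close> satisfies \<open>T\<^sup>* J = J T\<close>, so \<open>J u\<^sub>i\<close> is a unit eigenvector of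
  \<open>T\<^sup>*\<close> for \<open>conj \<lambda>\<^sub>i\<close>. As the \<open>\<lambda>\<^sub>i\<close> are distinct, \<open>U\<close> is invertible and every
  eigenspace of \<open>T\<^sup>*\<close> is one-dimensional, hence \<open>v\<^sub>i = c\<^sub>i J u\<^sub>i\<close> with \<open>|c\<^sub>i| = 1\<close>.
  Thus \<open>V = W\<^sup>* conj (W U) diag c\<close>, whose determinant has modulus \<open>|det U|\<close>.
\<close>

definition mat_cnj :: "complex^'n^'m \<Rightarrow> complex^'n^'m" where
  "mat_cnj M = (\<chi> i j. cnj (M $ i $ j))"

definition vec_cnj :: "complex^'n \<Rightarrow> complex^'n" where
  "vec_cnj x = (\<chi> i. cnj (x $ i))"

definition cinner :: "complex^'n \<Rightarrow> complex^'n \<Rightarrow> complex" where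
  "cinner x y = (\<Sum>k\<in>UNIV. cnj (x $ k) * y $ k)"

definition mat_of_cols :: "('n \<Rightarrow> complex^'m) \<Rightarrow> complex^'n^'m" where
  "mat_of_cols u = (\<chi> i j. u j $ i)"

lemma det_mat_cnj: "det (mat_cnj M) = cnj (det M)"
  unfolding det_def mat_cnj_def by simp

lemma cadj_eq_mat_cnj_transpose: "cadj M = mat_cnj (transpose M)"
  by (simp add: cadj_def mat_cnj_def transpose_def)

lemma det_cadj: "det (cadj M) = cnj (det M)"
  by (simp add: cadj_eq_mat_cnj_transpose det_mat_cnj)

lemma cadj_mult: "cadj (A ** B) = cadj B ** cadj A"
  by (simp add: cadj_def matrix_matrix_mult_def vec_eq_iff mult.commute)

lemma cadj_cadj [simp]: "cadj (cadj A) = A"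
  by (simp add: cadj_def vec_eq_iff)

lemma cadj_mat_1 [simp]: "cadj (mat 1) = mat 1"
  by (simp add: cadj_def mat_def vec_eq_iff)

lemma cadj_symmetric: "transpose S = S \<Longrightarrow> cadj S = mat_cnj S"
  by (simp add: cadj_eq_mat_cnj_transpose)

lemma mat_cnj_mult_vec_cnj: "mat_cnj A *v vec_cnj x = vec_cnj (A *v x)"
  by (simp add: vec_eq_iff matrix_vector_mult_def mat_cnj_def vec_cnj_def)

lemma vec_cnj_scale: "vec_cnj (c *s x) = cnj c *s vec_cnj x"
  by (simp add: vec_cnj_def vec_eq_iff)

lemma unitary_mat_right_inverse: "cadj W ** W = mat 1 \<Longrightarrow> W ** cadj W = mat 1"
  using matrix_left_right_inverse by blast

lemma cmod_eq_1_if_cnj_mult_eq_1: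
  assumes "cnj z * z = 1"
  shows "cmod z = 1"
proof -
  have "cmod z ^ 2 = 1"
    using arg_cong[OF assms, of cmod] by (metis complex_mod_cnj norm_mult norm_one power2_eq_square)
  then show ?thesis
    by (simp add: abs_square_eq_1)
qed

lemma cmod_det_unitary:
  assumes "cadj W ** W = mat 1"
  shows "cmod (det W) = 1"
proof (rule cmod_eq_1_if_cnj_mult_eq_1)
  have "det (cadj W ** W) = 1"
    using assms by simp
  then show "cnj (det W) * det W = 1"
    by (simp only: det_mul det_cadj)
qed

lemma cinner_mult_left: "cinner (A *v x) y = cinner x (cadj A *v y)"
proof -
  have "cinner (A *v x) y = (\<Sum>k\<in>UNIV. \<Sum>j\<in>UNIV. cnj (A$k$j) * cnj (x$j) * y$k)"
    by (simp add: cinner_def matrix_vector_mult_def sum_distrib_right)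
  also have "\<dots> = (\<Sum>j\<in>UNIV. \<Sum>k\<in>UNIV. cnj (A$k$j) * cnj (x$j) * y$k)"
    by (rule sum.swap)
  also have "\<dots> = cinner x (cadj A *v y)"
    by (simp add: cinner_def cadj_def matrix_vector_mult_def sum_distrib_left mult_ac)
  finally show ?thesis .
qed

lemma cinner_scale_right: "cinner x (c *s y) = c * cinner x y"
  by (simp add: cinner_def sum_distrib_left mult_ac)

lemma cinner_scale_left: "cinner (c *s x) y = cnj c * cinner x y"
  by (simp add: cinner_def sum_distrib_left mult_ac)

lemma cinner_vec_cnj: "cinner (vec_cnj x) (vec_cnj y) = cnj (cinner x y)"
  by (simp add: cinner_def vec_cnj_def mult_ac)

lemma cinner_self: "cinner x x = complex_of_real (norm x ^ 2)"
proof -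
  have "complex_of_real (norm x ^ 2) = (\<Sum>k\<in>UNIV. complex_of_real (cmod (x $ k)) ^ 2)"
    by (simp add: norm_vec_def L2_set_def sum_nonneg)
  also have "\<dots> = cinner x x"
  proof -
    have "complex_of_real (cmod z) ^ 2 = cnj z * z" for z
      using complex_norm_square[of z] by (simp add: mult.commute)
    then show ?thesis
      by (simp add: cinner_def)
  qed
  finally show ?thesis by simp
qed

lemma cinner_unitary:
  assumes "cadj A ** A = mat 1"
  shows "cinner (A *v x) (A *v y) = cinner x y"
  by (simp add: cinner_mult_left assms matrix_vector_mul_assoc)

lemma eigenvectors_independent:
  fixes T :: "complex^'n^'n" and u :: "'a \<Rightarrow> complex^'n"
  assumes inj: "inj_on lam S" and nz: "\<And>i. i \<in> S \<Longrightarrow> u i \<noteq> 0"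
    and ev: "\<And>i. i \<in> S \<Longrightarrow> T *v u i = lam i *s u i"
    and "finite S" and "(\<Sum>j\<in>S. x j *s u j) = 0" and "j \<in> S"
  shows "x j = 0"
  using \<open>finite S\<close> assms
proof (induction S arbitrary: x j rule: finite_induct)
  case empty
  then show ?case by simp
next
  case (insert a S)
  have sum_x: "(\<Sum>j\<in>S. x j *s u j) = - (x a *s u a)"
    using insert.hyps insert.prems(5) by (simp add: eq_neg_iff_add_eq_0 add.commute)
  have "T *v (\<Sum>j\<in>insert a S. x j *s u j) = 0"
    using insert.prems(5) by simp
  then have "(\<Sum>j\<in>insert a S. (x j * lam j) *s u j) = 0"
    using insert.prems(3)
    by (simp add: linear_sum[OF matrix_vector_mul_linear] vector_scalar_commute
        vector_smult_assoc mult.commute del: sum.insert)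
  then have sum_lam_x: "(\<Sum>j\<in>S. (x j * lam j) *s u j) = - ((x a * lam a) *s u a)"
    using insert.hyps by (simp add: eq_neg_iff_add_eq_0 add.commute)
  have "(\<Sum>j\<in>S. (x j * (lam j - lam a)) *s u j)
      = (\<Sum>j\<in>S. (x j * lam j) *s u j) - lam a *s (\<Sum>j\<in>S. x j *s u j)"
    by (simp add: vec_eq_iff sum_component sum_subtractf sum_distrib_left algebra_simps)
  also have "\<dots> = 0"
    unfolding sum_x sum_lam_x by (simp add: vec_eq_iff algebra_simps)
  finally have reduced: "(\<Sum>j\<in>S. (x j * (lam j - lam a)) *s u j) = 0" .
  have x_S: "x j = 0" if "j \<in> S" for j
  proof -
    have "x j * (lam j - lam a) = 0"
      by (rule insert.IH[OF _ _ _ insert.hyps(1) reduced that]) (use insert.prems in auto)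
    moreover have "lam a \<notin> lam ` S"
      using insert.prems(1) insert.hyps(2) by simp
    then have "lam j \<noteq> lam a"
      using that by (metis imageI)
    ultimately show ?thesis by simp
  qed
  then have "(\<Sum>j\<in>S. x j *s u j) = 0"
    by simp
  then have "x a *s u a = 0"
    using sum_x by simp
  moreover obtain k where "u a $ k \<noteq> 0"
    using insert.prems(2)[of a] by (auto simp: vec_eq_iff)
  ultimately have "x a = 0" by (auto simp: vec_eq_iff)
  with x_S insert.prems(6) show ?case by auto
qed

lemma mat_of_cols_mult_vec: "mat_of_cols u *v x = (\<Sum>j\<in>UNIV. x $ j *s u j)"
  by (simp add: mat_of_cols_def vec_eq_iff matrix_vector_mult_def sum_component mult.commute)

lemma mat_of_cols_eigenvectors_right_invertible:
  fixes T :: "complex^'n^'n" and lam :: "'n \<Rightarrow> complex"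
  assumes "inj lam" and "\<And>i. u i \<noteq> 0" and "\<And>i. T *v u i = lam i *s u i"
  obtains B where "mat_of_cols u ** B = mat 1"
proof -
  have "x = 0" if "mat_of_cols u *v x = 0" for x
  proof -
    have sum0: "(\<Sum>j\<in>UNIV. x $ j *s u j) = 0"
      using that by (simp add: mat_of_cols_mult_vec)
    have "x $ j = 0" for j
      by (rule eigenvectors_independent[OF _ _ _ finite_class.finite_UNIV sum0]) (use assms in auto)
    then show "x = 0" by (simp add: vec_eq_iff)
  qed
  then obtain B where "B ** mat_of_cols u = mat 1"
    using matrix_left_invertible_ker by blast
  then have "mat_of_cols u ** B = mat 1"
    using matrix_left_right_inverse by blast
  then show ?thesis
    by (rule that)
qed

lemma cinner_eigenvector_adjoint_eigenvector:
  assumes "T *v x = \<mu> *s x" and "cadj T *v y = cnj \<nu> *s y" and "\<mu> \<noteq> \<nu>"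
  shows "cinner x y = 0"
proof -
  have "cnj \<mu> * cinner x y = cnj \<nu> * cinner x y"
    using cinner_mult_left[of T x y] assms(1,2) by (simp add: cinner_scale_left cinner_scale_right)
  with assms(3) show ?thesis by simp
qed

text \<open>
  \<open>U\<^sup>* y\<close> has \<open>j\<close>-th entry \<open>\<langle>u\<^sub>j, y\<rangle>\<close>, which vanishes for \<open>j \<noteq> i\<close> when \<open>y\<close> is an
  eigenvector of \<open>T\<^sup>*\<close> for \<open>conj \<lambda>\<^sub>i\<close>; inverting \<open>U\<^sup>*\<close> recovers \<open>y\<close> from its \<open>i\<close>-th entry.
\<close>
lemma adjoint_eigenspace_rank_one:
  fixes T :: "complex^'n^'n" and lam :: "'n \<Rightarrow> complex"
  assumes "inj lam" and "\<And>j. u j \<noteq> 0" and "\<And>j. T *v u j = lam j *s u j"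
  obtains r where "\<And>y. cadj T *v y = cnj (lam i) *s y \<Longrightarrow> y = cinner (u i) y *s r"
proof -
  obtain B where "mat_of_cols u ** B = mat 1"
    using mat_of_cols_eigenvectors_right_invertible assms by blast
  then have inv: "cadj B ** cadj (mat_of_cols u) = mat 1"
    by (metis cadj_mult cadj_mat_1)
  have "y = cinner (u i) y *s (cadj B *v axis i 1)" if "cadj T *v y = cnj (lam i) *s y" for y
  proof -
    have "cinner (u j) y = 0" if "j \<noteq> i" for j
      using cinner_eigenvector_adjoint_eigenvector[OF assms(3) \<open>cadj T *v y = _\<close>] assms(1) that
      by (auto dest: injD)
    then have "cadj (mat_of_cols u) *v y = cinner (u i) y *s axis i 1"
      by (auto simp: vec_eq_iff axis_def mat_of_cols_def cadj_def matrix_vector_mult_def cinner_def)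
    then have "cadj B *v (cadj (mat_of_cols u) *v y) = cinner (u i) y *s (cadj B *v axis i 1)"
      by (simp add: vector_scalar_commute)
    then show ?thesis
      by (simp add: inv matrix_vector_mul_assoc)
  qed
  then show ?thesis using that by blast
qed

lemma adjoint_unit_eigenvectors_parallel:
  fixes T :: "complex^'n^'n" and lam :: "'n \<Rightarrow> complex"
  assumes "inj lam" and "\<And>j. u j \<noteq> 0" and "\<And>j. T *v u j = lam j *s u j"
    and y: "cadj T *v y = cnj (lam i) *s y" "norm y = 1"
    and z: "cadj T *v z = cnj (lam i) *s z" "norm z = 1"
  obtains c where "y = c *s z" and "cmod c = 1"
proof -
  obtain r where r: "\<And>y. cadj T *v y = cnj (lam i) *s y \<Longrightarrow> y = cinner (u i) y *s r"
    using adjoint_eigenspace_rank_one assms(1-3) by blast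
  define a b where "a = cinner (u i) y" and "b = cinner (u i) z"
  have yr: "y = a *s r" and zr: "z = b *s r"
    unfolding a_def b_def by (fact r[OF y(1)], fact r[OF z(1)])
  then have "b \<noteq> 0"
    using z(2) by auto
  have y_eq: "y = (a / b) *s z"
    using yr zr \<open>b \<noteq> 0\<close> by (simp add: vector_smult_assoc)
  have "cinner z z = 1"
    using z(2) by (simp add: cinner_self)
  then have "cnj (a / b) * (a / b) = cinner ((a / b) *s z) ((a / b) *s z)"
    by (simp add: cinner_scale_left cinner_scale_right mult.commute)
  also have "\<dots> = 1"
    using y(2) y_eq by (simp add: cinner_self)
  finally show ?thesis
    using y_eq that cmod_eq_1_if_cnj_mult_eq_1 by blast
qed

definition cnj_via :: "complex^'n^'n \<Rightarrow> complex^'n \<Rightarrow> complex^'n" where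
  "cnj_via W x = cadj W *v vec_cnj (W *v x)"

lemma cinner_cnj_via:
  assumes "cadj W ** W = mat 1"
  shows "cinner (cnj_via W x) (cnj_via W y) = cnj (cinner x y)"
proof -
  have "cadj (cadj W) ** cadj W = mat 1"
    using unitary_mat_right_inverse[OF assms] by simp
  then show ?thesis
    by (simp add: cnj_via_def cinner_unitary assms cinner_vec_cnj)
qed

lemma norm_cnj_via:
  assumes "cadj W ** W = mat 1"
  shows "norm (cnj_via W x) = norm x"
proof -
  have "complex_of_real (norm (cnj_via W x) ^ 2) = complex_of_real (norm x ^ 2)"
    using cinner_cnj_via[OF assms, of x x] by (simp only: cinner_self complex_cnj_complex_of_real)
  then have "norm (cnj_via W x) ^ 2 = norm x ^ 2"
    by (simp only: of_real_eq_iff)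
  then show ?thesis
    by (simp add: power2_eq_iff_nonneg)
qed

lemma adjoint_eigenvector_cnj_via:
  assumes "cadj W ** W = mat 1" and "transpose S = S"
    and "T = cadj W ** S ** W" and "T *v x = \<mu> *s x"
  shows "cadj T *v cnj_via W x = cnj \<mu> *s cnj_via W x"
proof -
  have WW: "W ** cadj W = mat 1"
    using unitary_mat_right_inverse[OF assms(1)] .
  have "S ** W = W ** T"
    by (simp add: assms(3) matrix_mul_assoc WW)
  have "cadj T = cadj W ** mat_cnj S ** W"
    by (simp add: assms(3) cadj_mult cadj_symmetric[OF assms(2)] matrix_mul_assoc)
  then have "cadj T *v cnj_via W x = cadj W *v (mat_cnj S *v ((W ** cadj W) *v vec_cnj (W *v x)))"
    by (simp add: cnj_via_def matrix_vector_mul_assoc matrix_mul_assoc)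
  also have "\<dots> = cadj W *v (mat_cnj S *v vec_cnj (W *v x))"
    by (simp add: WW)
  also have "\<dots> = cadj W *v vec_cnj ((S ** W) *v x)"
    by (simp add: mat_cnj_mult_vec_cnj matrix_vector_mul_assoc)
  also have "\<dots> = cnj \<mu> *s cnj_via W x"
    by (simp add: \<open>S ** W = W ** T\<close> assms(4) vector_scalar_commute vec_cnj_scale cnj_via_def
        flip: matrix_vector_mul_assoc)
  finally show ?thesis .
qed

lemma mat_of_cols_cnj_via:
  "mat_of_cols (\<lambda>i. cnj_via W (u i)) = cadj W ** mat_cnj (W ** mat_of_cols u)"
  by (simp add: vec_eq_iff mat_of_cols_def cnj_via_def matrix_matrix_mult_def
      matrix_vector_mult_def mat_cnj_def vec_cnj_def)

lemma det_mat_of_cols_scale: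
  "det (mat_of_cols (\<lambda>i. c i *s w i)) = det (mat_of_cols w) * (\<Prod>i\<in>UNIV. c i)"
proof -
  define D where "D = (\<chi> i j. if i = j then c i else (0::complex))"
  have "mat_of_cols (\<lambda>i. c i *s w i) = mat_of_cols w ** D"
    by (simp add: vec_eq_iff mat_of_cols_def matrix_matrix_mult_def D_def if_distrib mult.commute
        cong: if_cong)
  then show ?thesis
    by (simp add: det_mul det_diagonal D_def)
qed

theorem corollary2:
  fixes T :: "complex^'n^'n" and lam :: "'n \<Rightarrow> complex"
    and u v :: "'n \<Rightarrow> complex^'n"
  assumes "inj lam"
    and "\<And>i. norm (u i) = 1" and "\<And>i. T *v u i = lam i *s u i"
    and "\<And>i. norm (v i) = 1" and "\<And>i. cadj T *v v i = cnj (lam i) *s v i"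
    and "cmod (det (\<chi> i j. u j $ i)) \<noteq> cmod (det (\<chi> i j. v j $ i))"
  shows "\<not> (\<exists>S. complex_symmetric S \<and> unitarily_equivalent T S)"
proof
  assume "\<exists>S. complex_symmetric S \<and> unitarily_equivalent T S"
  then obtain S W where S: "transpose S = S" and W: "cadj W ** W = mat 1"
    and T: "T = cadj W ** S ** W"
    by (auto simp: complex_symmetric_def unitarily_equivalent_def unitary_mat_def)
  have u_nz: "u i \<noteq> 0" for i
    using assms(2)[of i] by auto
  have "\<exists>c. v i = c *s cnj_via W (u i) \<and> cmod c = 1" for i
    using adjoint_unit_eigenvectors_parallel[OF assms(1) u_nz assms(3) assms(5,4)
        adjoint_eigenvector_cnj_via[OF W S T assms(3)]] norm_cnj_via[OF W] assms(2) by metis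
  then obtain c where c: "\<And>i. v i = c i *s cnj_via W (u i)" "\<And>i. cmod (c i) = 1"
    by metis
  then have "v = (\<lambda>i. c i *s cnj_via W (u i))"
    by auto
  then have "det (mat_of_cols v) = cnj (det W) * cnj (det W * det (mat_of_cols u)) * (\<Prod>i\<in>UNIV. c i)"
    by (simp add: det_mat_of_cols_scale mat_of_cols_cnj_via det_mul det_cadj det_mat_cnj)
  then have "cmod (det (mat_of_cols v)) = cmod (det (mat_of_cols u))"
    by (simp add: norm_mult cmod_det_unitary[OF W] c(2) flip: prod_norm)
  with assms(6) show False
    by (simp add: mat_of_cols_def)
qed

end
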